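(* Let $x\in\mathcal D$ be such that $q_n(t)=\sum_{i:\,t^n_i\le t}(x(t^n_{i+1})-x(t^n_i))^2$ converges in $(\mathcal D,d)$ to some $\tilde q$. Then $x\in\mathcal Q_0^\pi$ and $\tilde q=[x]_\pi$.
   Context: Let $\pi=(\pi_n)_{n\ge1}$ be a sequence of partitions $\pi_n=(t^n_0,\dots,t^n_{k_n})$ with $0=t^n_0<\dots<t^n_{k_n}<\infty$, $t^n_{k_n}\uparrow\infty$, and mesh tending to $0$ on compacts; sums over $i$ run over $0\le i<k_n$. $\mathcal D$ is the space of càdlàg functions $[0,\infty)\to\mathbb R$ with a metric $d$ inducing the Skorokhod $J_1$ topology; $\Delta x(u)=x(u)-x(u-)$. $\mathcal{Q}_0^\pi$ is the set of $x\in\mathcal D$ such that the measures $\mu_n=\sum_i(x(t^n_{i+1})-x(t^n_i))^2\delta_{t^n_i}$ converge vaguely to a Radon measure $\mu$ on $[0,\infty)$ such that $t\mapsto\mu([0,t])-\sum_{u\le t}(\Delta x(u))^2$ is a continuous nondecreasing function; for such $x$, $[x]_\pi(t):=\mu([0,t])$. *)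

theory Defs
  imports "HOL-Analysis.Analysis"
begin

text \<open>Functions on [0,oo) are represented as real => real; values at negative
  arguments are irrelevant.\<close>

definition cadlag :: "(real \<Rightarrow> real) \<Rightarrow> bool" where
  "cadlag x \<longleftrightarrow>
     (\<forall>s\<ge>0. (x \<longlongrightarrow> x s) (at_right s)) \<and>
     (\<forall>s>0. \<exists>l. (x \<longlongrightarrow> l) (at_left s))"

text \<open>Jump Delta x(u) = x(u) - x(u-), with the convention x(0-) = x(0).\<close>
definition jump :: "(real \<Rightarrow> real) \<Rightarrow> real \<Rightarrow> real" where
  "jump x u = (if u > 0 then x u - Lim (at_left u) x else 0)"

text \<open>A sequence of partitions pi_n = (t n 0, ..., t n (k n)).\<close>
definition partition_seq :: "(nat \<Rightarrow> nat) \<Rightarrow> (nat \<Rightarrow> nat \<Rightarrow> real) \<Rightarrow> bool" where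
  "partition_seq k t \<longleftrightarrow>
     (\<forall>n. t n 0 = 0) \<and>
     (\<forall>n. \<forall>i<k n. t n i < t n (Suc i)) \<and>
     mono (\<lambda>n. t n (k n)) \<and> filterlim (\<lambda>n. t n (k n)) at_top sequentially \<and>
     (\<forall>T. \<forall>\<epsilon>>0. \<forall>\<^sub>F n in sequentially. \<forall>i<k n. t n i \<le> T \<longrightarrow> t n (Suc i) - t n i < \<epsilon>)"

definition time_change :: "(real \<Rightarrow> real) \<Rightarrow> bool" where
  "time_change l \<longleftrightarrow> continuous_on {0..} l \<and> strict_mono_on {0..} l \<and>
     l 0 = 0 \<and> l ` {0..} = {0..}"

text \<open>Convergence in the Skorokhod J1 topology on D[0,oo) (characterisation of
  Jacod-Shiryaev VI.1.14; independent of the choice of compatible metric d).\<close>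
definition skorokhod_tendsto :: "(nat \<Rightarrow> real \<Rightarrow> real) \<Rightarrow> (real \<Rightarrow> real) \<Rightarrow> bool" where
  "skorokhod_tendsto xs y \<longleftrightarrow>
     (\<exists>l. (\<forall>n. time_change (l n)) \<and>
        (\<forall>\<epsilon>>0. \<forall>\<^sub>F n in sequentially. \<forall>s\<ge>0. \<bar>l n s - s\<bar> < \<epsilon>) \<and>
        (\<forall>N. \<forall>\<epsilon>>0. \<forall>\<^sub>F n in sequentially. \<forall>s\<in>{0..N}. \<bar>xs n (l n s) - y s\<bar> < \<epsilon>))"

text \<open>Integral of f against mu_n = sum_i (x(t_{i+1})-x(t_i))^2 delta_{t_i}.\<close>
definition qv_measure_int ::
  "(nat \<Rightarrow> nat) \<Rightarrow> (nat \<Rightarrow> nat \<Rightarrow> real) \<Rightarrow> (real \<Rightarrow> real) \<Rightarrow> nat \<Rightarrow> (real \<Rightarrow> real) \<Rightarrow> real" where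
  "qv_measure_int k t x n f = (\<Sum>i<k n. (x (t n (Suc i)) - x (t n i))\<^sup>2 * f (t n i))"

definition qv_limit ::
  "(nat \<Rightarrow> nat) \<Rightarrow> (nat \<Rightarrow> nat \<Rightarrow> real) \<Rightarrow> (real \<Rightarrow> real) \<Rightarrow> real measure \<Rightarrow> bool" where
  "qv_limit k t x \<mu> \<longleftrightarrow>
     sets \<mu> = sets (restrict_space borel {0::real..}) \<and>
     (\<forall>T. emeasure \<mu> {0..T} < \<infinity>) \<and>
     (\<forall>f. continuous_on {0..} f \<and> (\<exists>K. \<forall>s\<ge>K. f s = 0) \<longrightarrow>
          (\<lambda>n. qv_measure_int k t x n f) \<longlonglongrightarrow> integral\<^sup>L \<mu> f) \<and>
     (\<forall>s\<ge>0. (\<lambda>u. (jump x u)\<^sup>2) summable_on {0<..s}) \<and>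
     continuous_on {0..} (\<lambda>s. measure \<mu> {0..s} - (\<Sum>\<^sub>\<infinity>u\<in>{0<..s}. (jump x u)\<^sup>2)) \<and>
     mono_on {0..} (\<lambda>s. measure \<mu> {0..s} - (\<Sum>\<^sub>\<infinity>u\<in>{0<..s}. (jump x u)\<^sup>2))"

definition in_Q0 :: "(nat \<Rightarrow> nat) \<Rightarrow> (nat \<Rightarrow> nat \<Rightarrow> real) \<Rightarrow> (real \<Rightarrow> real) \<Rightarrow> bool" where
  "in_Q0 k t x \<longleftrightarrow> cadlag x \<and> (\<exists>\<mu>. qv_limit k t x \<mu>)"

definition quad_var :: "(nat \<Rightarrow> nat) \<Rightarrow> (nat \<Rightarrow> nat \<Rightarrow> real) \<Rightarrow> (real \<Rightarrow> real) \<Rightarrow> real \<Rightarrow> real" where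
  "quad_var k t x s = measure (THE \<mu>. qv_limit k t x \<mu>) {0..s}"

definition qv_approx :: "(nat \<Rightarrow> nat) \<Rightarrow> (nat \<Rightarrow> nat \<Rightarrow> real) \<Rightarrow> (real \<Rightarrow> real) \<Rightarrow> nat \<Rightarrow> real \<Rightarrow> real" where
  "qv_approx k t x n s = (\<Sum>i\<in>{i. i < k n \<and> t n i \<le> s}. (x (t n (Suc i)) - x (t n i))\<^sup>2)"

end

theory Submission
  imports Defs
begin

text \<open>
  Skorokhod convergence of the discrete quadratic variations q_n to q provides time changes
  l_n, uniformly close to the identity, along which q_n \<circ> l_n converges to q locally uniformly.
  Hence q is nondecreasing with q 0 = 0, and its Stieltjes measure \<mu> on [0, \<infinity>) is the candidate
  limit of the discrete measures \<mu>_n. For continuous compactly supported f, both integrals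
  \<integral> f d\<mu>_n and \<integral> f d\<mu> are close to Riemann-Stieltjes sums of f over a fine grid, taken
  against q_n \<circ> l_n and against q respectively, and these sums converge; so \<mu>_n \<rightarrow> \<mu> vaguely.

  The jumps of q are the squared jumps of x: the squared increment of x over the partition
  interval containing u tends to (\<Delta>x u)^2, while by the cadlag property all other increments
  near u are eventually small. Therefore q minus the sum of its jumps is continuous and
  nondecreasing. Finally, vague limits of locally finite measures on [0, \<infinity>) are unique,
  which identifies [x]_\<pi> with q.
\<close>

section \<open>Locally finite measures on the half-line\<close>

lemma sets_restrict_Ici_eq_sigma_atMost:
  "sets (restrict_space borel {0::real..}) = sigma_sets {0..} ((\<inter>) {0..} ` range atMost)"
proof -
  have borel: "sets borel = sigma_sets UNIV (range (\<lambda>a. {..a::real}))"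
    by (subst borel_eq_atMost) (simp add: sets_measure_of)
  have "sets (restrict_space borel {0::real..}) = (\<inter>) {0..} ` sets borel"
    by (rule sets_restrict_space)
  also have "\<dots> = sigma_sets {0..} ((\<inter>) {0::real..} ` range atMost)"
    unfolding borel by (rule sigma_sets_Int) (auto simp flip: borel)
  finally show ?thesis .
qed

lemma measure_eq_on_Ici_by_Icc:
  fixes M N :: "real measure"
  assumes sets_M: "sets M = sets (restrict_space borel {0..})"
    and sets_N: "sets N = sets (restrict_space borel {0..})"
    and finite_M: "\<And>b. emeasure M {0..b} < \<infinity>"
    and eq: "\<And>b. 0 \<le> b \<Longrightarrow> emeasure M {0..b} = emeasure N {0..b}"
  shows "M = N"
proof (rule measure_eqI_generator_eq[where \<Omega>="{0..}" and E="(\<inter>) {0..} ` range atMost"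
      and A="\<lambda>i. {0..real i}"])
  show "Int_stable ((\<inter>) {0::real..} ` range atMost)"
  proof (unfold Int_stable_def, safe)
    fix a b :: real
    show "{0..} \<inter> {..a} \<inter> ({0..} \<inter> {..b}) \<in> (\<inter>) {0..} ` range atMost"
      by (rule image_eqI[where x="{..min a b}"]) auto
  qed
  show "(\<inter>) {0::real..} ` range atMost \<subseteq> Pow {0..}" by auto
  show "sets M = sigma_sets {0..} ((\<inter>) {0::real..} ` range atMost)"
    and "sets N = sigma_sets {0..} ((\<inter>) {0::real..} ` range atMost)"
    using sets_M sets_N sets_restrict_Ici_eq_sigma_atMost by simp_all
  fix X assume "X \<in> (\<inter>) {0::real..} ` range atMost"
  then obtain b where X: "X = {0..} \<inter> {..b}" by auto
  show "emeasure M X = emeasure N X"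
  proof (cases "0 \<le> b")
    case True
    then show ?thesis using eq[of b] X by (simp add: atLeastAtMost_def Int_commute)
  next
    case False
    then have "X = {}" using X by auto
    then show ?thesis by simp
  qed
next
  show "range (\<lambda>i. {0..real i}) \<subseteq> (\<inter>) {0::real..} ` range atMost"
    by (auto simp: image_def atLeastAtMost_def)
  show "(\<Union>i. {0..real i}) = {0..}"
    by (auto, meson real_arch_simple)
  show "emeasure M {0..real i} \<noteq> \<infinity>" for i
    using finite_M[of "real i"] by simp
qed

definition Icc_cutoff :: "real \<Rightarrow> nat \<Rightarrow> real \<Rightarrow> real" where
  "Icc_cutoff b j r = max 0 (min 1 (1 - (r - b) * real (Suc j)))"

lemma continuous_on_Icc_cutoff: "continuous_on A (Icc_cutoff b j)"
  unfolding Icc_cutoff_def by (intro continuous_intros)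

lemma Icc_cutoff_eq_0: "b + 1 \<le> r \<Longrightarrow> Icc_cutoff b j r = 0"
proof -
  assume "b + 1 \<le> r"
  then have "1 * 1 \<le> (r - b) * real (Suc j)" by (intro mult_mono) auto
  then show ?thesis unfolding Icc_cutoff_def by simp
qed

lemma Icc_cutoff_bounds: "0 \<le> Icc_cutoff b j r" "Icc_cutoff b j r \<le> 1"
  unfolding Icc_cutoff_def by auto

lemma Icc_cutoff_tendsto: "(\<lambda>j. Icc_cutoff b j r) \<longlonglongrightarrow> (if r \<le> b then 1 else 0)"
proof (cases "r \<le> b")
  case True
  then have "(r - b) * real (Suc j) \<le> 0" for j by (simp add: mult_nonpos_nonneg)
  then show ?thesis using True by (simp add: Icc_cutoff_def)
next
  case False
  obtain N :: nat where N: "1 / (r - b) < real N" using reals_Archimedean2 by blast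
  have "Icc_cutoff b j r = 0" if "N \<le> j" for j
  proof -
    have "1 / (r - b) < real (Suc j)" using N that by simp
    then have "1 \<le> (r - b) * real (Suc j)" using False by (simp add: divide_less_eq mult.commute)
    then show ?thesis unfolding Icc_cutoff_def by simp
  qed
  then have "\<forall>\<^sub>F j in sequentially. Icc_cutoff b j r = 0" by (auto simp: eventually_sequentially)
  then show ?thesis using False by (simp add: tendsto_eventually)
qed

lemma integrable_indicator_Ici_measure:
  fixes N :: "real measure"
  assumes sets_N: "sets N = sets (restrict_space borel {0..})"
    and finite_N: "emeasure N {0..b} < \<infinity>"
    and A: "A \<in> sets borel" "A \<subseteq> {0..b}"
  shows "integrable N (indicator A :: real \<Rightarrow> real)"
proof -
  have "space N = {0..}" using sets_eq_imp_space_eq[OF sets_N] by simp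
  then have "A \<inter> space N = A" using A by auto
  moreover have "emeasure N A \<le> emeasure N {0..b}"
    by (rule emeasure_mono) (use A in \<open>auto simp: sets_N sets_restrict_space_iff\<close>)
  moreover have "A \<in> sets N" using A by (auto simp: sets_N sets_restrict_space_iff)
  ultimately show ?thesis using finite_N by (simp add: integrable_indicator_iff)
qed

lemma integral_Icc_cutoff_tendsto:
  fixes N :: "real measure"
  assumes sets_N: "sets N = sets (restrict_space borel {0..})"
    and finite_N: "\<And>b. emeasure N {0..b} < \<infinity>"
    and "0 \<le> b"
  shows "(\<lambda>j. integral\<^sup>L N (Icc_cutoff b j)) \<longlonglongrightarrow> measure N {0..b}"
proof -
  have space_N: "space N = {0..}" using sets_eq_imp_space_eq[OF sets_N] by simp
  have integrable: "integrable N (indicator {0..c} :: real \<Rightarrow> real)" for c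
    by (rule integrable_indicator_Ici_measure[OF sets_N finite_N]) auto
  have "(\<lambda>j. integral\<^sup>L N (Icc_cutoff b j)) \<longlonglongrightarrow> integral\<^sup>L N (indicator {0..b})"
  proof (rule integral_dominated_convergence[where w="indicator {0..b+1}"])
    show "Icc_cutoff b j \<in> borel_measurable N" for j
      using borel_measurable_continuous_on_restrict[OF continuous_on_Icc_cutoff]
        measurable_cong_sets[OF sets_N refl] by blast
    show "AE r in N. (\<lambda>j. Icc_cutoff b j r) \<longlonglongrightarrow> indicator {0..b} r"
    proof (rule AE_I2)
      fix r assume "r \<in> space N"
      then show "(\<lambda>j. Icc_cutoff b j r) \<longlonglongrightarrow> indicator {0..b} r"
        using Icc_cutoff_tendsto[of b r] by (cases "r \<le> b") (auto simp: space_N indicator_def)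
    qed
    show "AE r in N. norm (Icc_cutoff b j r) \<le> indicator {0..b+1} r" for j
      using Icc_cutoff_bounds[of b j] Icc_cutoff_eq_0[of b _ j]
      by (intro AE_I2) (auto simp: space_N indicator_def)
  qed (use integrable borel_measurable_integrable in auto)
  moreover have "integral\<^sup>L N (indicator {0..b}) = measure N {0..b}"
    using space_N by (simp add: Int_absorb2 subset_eq)
  ultimately show ?thesis by simp
qed

lemma measure_eq_on_Ici_by_integrals:
  fixes M N :: "real measure"
  assumes sets_M: "sets M = sets (restrict_space borel {0..})"
    and sets_N: "sets N = sets (restrict_space borel {0..})"
    and finite_M: "\<And>b. emeasure M {0..b} < \<infinity>"
    and finite_N: "\<And>b. emeasure N {0..b} < \<infinity>"
    and integral_eq: "\<And>f :: real \<Rightarrow> real. continuous_on {0..} f \<Longrightarrow> \<exists>K. \<forall>s\<ge>K. f s = 0 \<Longrightarrow>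
      integral\<^sup>L M f = integral\<^sup>L N f"
  shows "M = N"
proof (rule measure_eq_on_Ici_by_Icc[OF sets_M sets_N finite_M])
  fix b :: real assume "0 \<le> b"
  have "integral\<^sup>L M (Icc_cutoff b j) = integral\<^sup>L N (Icc_cutoff b j)" for j
    by (rule integral_eq[OF continuous_on_Icc_cutoff]) (use Icc_cutoff_eq_0 in blast)
  then have "measure M {0..b} = measure N {0..b}"
    using integral_Icc_cutoff_tendsto[OF sets_M finite_M \<open>0 \<le> b\<close>]
      integral_Icc_cutoff_tendsto[OF sets_N finite_N \<open>0 \<le> b\<close>]
    by (simp add: LIMSEQ_unique)
  then show "emeasure M {0..b} = emeasure N {0..b}"
    using finite_M[of b] finite_N[of b] by (simp add: emeasure_eq_ennreal_measure)
qed

lemma qv_limit_unique: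
  assumes "qv_limit k t x \<mu>" and "qv_limit k t x \<nu>"
  shows "\<mu> = \<nu>"
proof (rule measure_eq_on_Ici_by_integrals)
  show "sets \<mu> = sets (restrict_space borel {0..})" "sets \<nu> = sets (restrict_space borel {0..})"
    "emeasure \<mu> {0..b} < \<infinity>" "emeasure \<nu> {0..b} < \<infinity>" for b
    using assms by (simp_all add: qv_limit_def)
  fix f :: "real \<Rightarrow> real"
  assume "continuous_on {0..} f" "\<exists>K. \<forall>s\<ge>K. f s = 0"
  then have "(\<lambda>n. qv_measure_int k t x n f) \<longlonglongrightarrow> integral\<^sup>L \<mu> f"
    "(\<lambda>n. qv_measure_int k t x n f) \<longlonglongrightarrow> integral\<^sup>L \<nu> f"
    using assms by (simp_all add: qv_limit_def)
  then show "integral\<^sup>L \<mu> f = integral\<^sup>L \<nu> f" by (rule LIMSEQ_unique)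
qed

section \<open>Cadlag functions and their jumps\<close>

lemma sq_diff_le_if_near:
  fixes a b c \<epsilon> :: real
  assumes "0 < \<epsilon>" "\<bar>a - c\<bar> < sqrt \<epsilon> / 2" "\<bar>b - c\<bar> < sqrt \<epsilon> / 2"
  shows "(b - a)\<^sup>2 \<le> \<epsilon>"
proof -
  have "\<bar>b - a\<bar> \<le> \<bar>sqrt \<epsilon>\<bar>" using assms by linarith
  then show ?thesis unfolding abs_le_square_iff using assms by simp
qed

lemma cadlag_oscillation_near:
  fixes x :: "real \<Rightarrow> real"
  assumes "cadlag x" "0 < u" "0 < \<rho>"
  obtains \<eta> where "0 < \<eta>" "\<And>y. u \<le> y \<Longrightarrow> y < u + \<eta> \<Longrightarrow> \<bar>x y - x u\<bar> < \<rho>"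
    "\<And>y. u - \<eta> < y \<Longrightarrow> y < u \<Longrightarrow> \<bar>x y - Lim (at_left u) x\<bar> < \<rho>"
proof -
  have "(x \<longlongrightarrow> x u) (at_right u)" using assms(1,2) by (simp add: cadlag_def)
  moreover have "(x \<longlongrightarrow> Lim (at_left u) x) (at_left u)"
    using assms(1,2) unfolding cadlag_def by (metis tendsto_Lim trivial_limit_at_left_real)
  ultimately have "\<forall>\<^sub>F y in at_right u. \<bar>x y - x u\<bar> < \<rho>"
    "\<forall>\<^sub>F y in at_left u. \<bar>x y - Lim (at_left u) x\<bar> < \<rho>"
    using \<open>0 < \<rho>\<close> by (auto simp: tendsto_iff dist_real_def)
  then obtain b\<^sub>r b\<^sub>l where "u < b\<^sub>r" "\<And>y. u < y \<Longrightarrow> y < b\<^sub>r \<Longrightarrow> \<bar>x y - x u\<bar> < \<rho>"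
    and "b\<^sub>l < u" "\<And>y. b\<^sub>l < y \<Longrightarrow> y < u \<Longrightarrow> \<bar>x y - Lim (at_left u) x\<bar> < \<rho>"
    unfolding eventually_at_right_field eventually_at_left_field by blast
  then show ?thesis
    using \<open>0 < \<rho>\<close> by (intro that[of "min (b\<^sub>r - u) (u - b\<^sub>l)"]) (auto simp: order_le_less)
qed

locale nondecreasing_cadlag =
  fixes q :: "real \<Rightarrow> real"
  assumes cadlag: "cadlag q" and mono: "mono_on {0..} q"
begin

lemma mono_le: "0 \<le> s \<Longrightarrow> s \<le> s' \<Longrightarrow> q s \<le> q s'"
  using mono by (simp add: mono_on_def)

lemma tendsto_at_right: "0 \<le> s \<Longrightarrow> (q \<longlongrightarrow> q s) (at_right s)"
  using cadlag by (simp add: cadlag_def)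

lemma tendsto_left_lim: "0 < s \<Longrightarrow> (q \<longlongrightarrow> Lim (at_left s) q) (at_left s)"
  using cadlag unfolding cadlag_def by (metis tendsto_Lim trivial_limit_at_left_real)

lemma le_left_lim:
  assumes "0 \<le> r" "r < u"
  shows "q r \<le> Lim (at_left u) q"
proof (rule tendsto_lowerbound[OF tendsto_left_lim])
  show "\<forall>\<^sub>F y in at_left u. q r \<le> q y"
    unfolding eventually_at_left_field using assms by (intro exI[of _ r]) (auto intro: mono_le)
qed (use assms in auto)

lemma left_lim_le:
  assumes "0 < u"
  shows "Lim (at_left u) q \<le> q u"
proof (rule tendsto_upperbound[OF tendsto_left_lim])
  show "\<forall>\<^sub>F y in at_left u. q y \<le> q u"
    unfolding eventually_at_left_field using assms by (intro exI[of _ 0]) (auto intro: mono_le)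
qed (use assms in auto)

lemma jump_nonneg: "0 \<le> jump q u"
  using left_lim_le[of u] by (simp add: jump_def)

lemma sum_jump_le:
  assumes "finite F" "0 \<le> a"
  shows "F \<subseteq> {a<..b} \<Longrightarrow> a \<le> b \<Longrightarrow> sum (jump q) F \<le> q b - q a"
  using assms(1)
proof (induction F arbitrary: b rule: finite_ranking_induct[where f="\<lambda>y. y"])
  case empty
  then show ?case using mono_le[of a b] assms by simp
next
  case (insert z S)
  show ?case
  proof (cases "z \<in> S")
    case True
    then show ?thesis using insert by (simp add: insert_absorb)
  next
    case False
    have z: "a < z" "z \<le> b" using insert.prems by auto
    have "sum (jump q) S \<le> Lim (at_left z) q - q a"
    proof (cases "S = {}")
      case True
      then show ?thesis using le_left_lim[of a z] z assms by simp
    next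
      case False
      let ?r = "Max S"
      have "?r \<in> S" using False insert.hyps by simp
      moreover have "?r \<le> z" using insert.hyps \<open>?r \<in> S\<close> by blast
      ultimately have "?r < z" using \<open>z \<notin> S\<close> by (cases "?r = z") auto
      have "sum (jump q) S \<le> q ?r - q a"
        using \<open>?r \<in> S\<close> insert.prems insert.hyps by (intro insert.IH) auto
      moreover have "q ?r \<le> Lim (at_left z) q"
        using le_left_lim[of ?r z] \<open>?r < z\<close> \<open>?r \<in> S\<close> insert.prems assms by auto
      ultimately show ?thesis by simp
    qed
    moreover have "q z \<le> q b" using mono_le z assms by simp
    ultimately show ?thesis using False insert.hyps z assms by (simp add: jump_def)
  qed
qed

lemma jump_summable_on:
  assumes "0 \<le> a" "A \<subseteq> {a<..b}"
  shows "jump q summable_on A"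
proof (rule nonneg_bdd_above_summable_on)
  show "bdd_above (sum (jump q) ` {F. F \<subseteq> A \<and> finite F})"
  proof (rule bdd_aboveI[where M="max 0 (q b - q a)"])
    fix y assume "y \<in> sum (jump q) ` {F. F \<subseteq> A \<and> finite F}"
    then obtain F where F: "F \<subseteq> A" "finite F" "y = sum (jump q) F" by auto
    show "y \<le> max 0 (q b - q a)"
    proof (cases "F = {}")
      case False
      then have "a \<le> b" using F assms by fastforce
      then show ?thesis using sum_jump_le[OF F(2) assms(1)] F assms by fastforce
    qed (use F in simp)
  qed
qed (rule jump_nonneg)

lemma infsum_jump_le:
  assumes "0 \<le> a" "a \<le> b"
  shows "(\<Sum>\<^sub>\<infinity>u\<in>{a<..b}. jump q u) \<le> q b - q a"
  using sum_jump_le assms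
  by (intro infsum_le_finite_sums jump_summable_on[OF assms(1) order_refl]) blast

definition continuous_part :: "real \<Rightarrow> real" where
  "continuous_part s = q s - (\<Sum>\<^sub>\<infinity>u\<in>{0<..s}. jump q u)"

lemma continuous_part_diff:
  assumes "0 \<le> s" "s \<le> s'"
  shows "continuous_part s' - continuous_part s = q s' - q s - (\<Sum>\<^sub>\<infinity>u\<in>{s<..s'}. jump q u)"
proof -
  have "{0<..s'} = {0<..s} \<union> {s<..s'}" using assms by auto
  moreover have "infsum (jump q) ({0<..s} \<union> {s<..s'}) =
      infsum (jump q) {0<..s} + infsum (jump q) {s<..s'}"
    by (rule infsum_Un_disjoint) (use jump_summable_on assms in auto)
  ultimately show ?thesis unfolding continuous_part_def by simp
qed

lemma continuous_part_mono_le: "0 \<le> s \<Longrightarrow> s \<le> s' \<Longrightarrow> continuous_part s \<le> continuous_part s'"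
  using continuous_part_diff infsum_jump_le by fastforce

lemma continuous_part_diff_le:
  "0 \<le> s \<Longrightarrow> s \<le> s' \<Longrightarrow> continuous_part s' - continuous_part s \<le> q s' - q s"
  using continuous_part_diff infsum_nonneg[of "{_<.._}" "jump q"] jump_nonneg by fastforce

lemma continuous_part_diff_le_left_lim:
  assumes "0 \<le> r" "r < s"
  shows "continuous_part s - continuous_part r \<le> Lim (at_left s) q - q r"
proof -
  have "{r<..s} = insert s {r<..<s}" using assms by auto
  moreover have "jump q summable_on {r<..<s}"
    by (rule jump_summable_on[of r _ s]) (use assms in auto)
  ultimately have "infsum (jump q) {r<..s} = jump q s + infsum (jump q) {r<..<s}"
    by (simp add: infsum_insert)
  moreover have "0 \<le> infsum (jump q) {r<..<s}" by (rule infsum_nonneg) (rule jump_nonneg)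
  moreover have "jump q s = q s - Lim (at_left s) q" using assms by (simp add: jump_def)
  ultimately show ?thesis using continuous_part_diff[of r s] assms by linarith
qed

lemma continuous_part_tendsto_at_right:
  assumes "0 \<le> s"
  shows "(continuous_part \<longlongrightarrow> continuous_part s) (at_right s)"
proof (rule tendsto_sandwich[of "\<lambda>_. continuous_part s" _ _ "\<lambda>r. continuous_part s + (q r - q s)"])
  show "\<forall>\<^sub>F r in at_right s. continuous_part s \<le> continuous_part r"
    "\<forall>\<^sub>F r in at_right s. continuous_part r \<le> continuous_part s + (q r - q s)"
    using assms continuous_part_mono_le continuous_part_diff_le[of s]
    by (auto simp: eventually_at_right_field intro!: exI[of _ "s + 1"] simp: algebra_simps)
  show "((\<lambda>r. continuous_part s + (q r - q s)) \<longlongrightarrow> continuous_part s) (at_right s)"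
    using tendsto_at_right[OF assms] by (auto intro!: tendsto_eq_intros)
qed simp

text \<open>Left continuity holds because the jump of q at s has been subtracted.\<close>

lemma continuous_part_tendsto_at_left:
  assumes "0 < s"
  shows "(continuous_part \<longlongrightarrow> continuous_part s) (at_left s)"
proof (rule tendsto_sandwich[of "\<lambda>r. continuous_part s - (Lim (at_left s) q - q r)"
      _ _ "\<lambda>_. continuous_part s"])
  show "\<forall>\<^sub>F r in at_left s. continuous_part s - (Lim (at_left s) q - q r) \<le> continuous_part r"
    "\<forall>\<^sub>F r in at_left s. continuous_part r \<le> continuous_part s"
    using assms continuous_part_mono_le continuous_part_diff_le_left_lim[of _ s]
    by (auto simp: eventually_at_left_field algebra_simps intro!: exI[of _ 0])
  show "((\<lambda>r. continuous_part s - (Lim (at_left s) q - q r)) \<longlongrightarrow> continuous_part s) (at_left s)"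
    using tendsto_left_lim[OF assms] by (auto intro!: tendsto_eq_intros)
qed simp

lemma continuous_on_continuous_part: "continuous_on {0..} continuous_part"
  unfolding continuous_on_def
proof (intro ballI)
  fix s :: real assume "s \<in> {0..}"
  show "(continuous_part \<longlongrightarrow> continuous_part s) (at s within {0..})"
  proof (cases "s = 0")
    case True
    then show ?thesis
      using continuous_part_tendsto_at_right[of 0] by (simp add: at_within_Ici_at_right)
  next
    case False
    then have "(continuous_part \<longlongrightarrow> continuous_part s) (at s)"
      using continuous_part_tendsto_at_right continuous_part_tendsto_at_left \<open>s \<in> {0..}\<close>
      by (intro filterlim_split_at_real) auto
    then show ?thesis by (rule tendsto_within_subset) simp
  qed
qed

end

section \<open>Riemann-Stieltjes sums and Stieltjes measures\<close>

definition stieltjes_sum :: "(real \<Rightarrow> real) \<Rightarrow> (real \<Rightarrow> real) \<Rightarrow> (nat \<Rightarrow> real) \<Rightarrow> nat \<Rightarrow> real" where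
  "stieltjes_sum f F b m = (\<Sum>j<m. f (b j) * (F (b (Suc j)) - F (b j)))"

lemma stieltjes_sum_Suc:
  "stieltjes_sum f F b (Suc m) = stieltjes_sum f F b m + f (b m) * (F (b (Suc m)) - F (b m))"
  by (simp add: stieltjes_sum_def)

lemma grid_cell_exists:
  fixes b :: "nat \<Rightarrow> real"
  assumes "\<And>j. b j \<le> b (Suc j)"
  shows "b 0 < r \<Longrightarrow> r \<le> b m \<Longrightarrow> \<exists>j<m. b j < r \<and> r \<le> b (Suc j)"
proof (induction m)
  case (Suc m)
  then show ?case by (cases "r \<le> b m") (auto intro: less_SucI)
qed simp

lemma sum_indicator_grid_cell:
  fixes b :: "nat \<Rightarrow> real"
  assumes mono: "\<And>j. b j \<le> b (Suc j)" and "j < m" "b j < r" "r \<le> b (Suc j)"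
  shows "(\<Sum>j'<m. c j' * indicator {b j'<..b (Suc j')} r) = (c j :: real)"
proof -
  have b_le: "i \<le> j \<Longrightarrow> b i \<le> b j" for i j using lift_Suc_mono_le[of b, OF mono] by blast
  have "indicator {b j'<..b (Suc j')} r = (if j' = j then 1 else (0::real))" for j'
  proof (cases j' j rule: linorder_cases)
    case less
    then show ?thesis using b_le[of "Suc j'" j] assms by auto
  next
    case greater
    then show ?thesis using b_le[of "Suc j" j'] assms by auto
  qed (use assms in auto)
  then have "(\<Sum>j'<m. c j' * indicator {b j'<..b (Suc j')} r) = (\<Sum>j'<m. if j' = j then c j else 0)"
    by (intro sum.cong) auto
  then show ?thesis using \<open>j < m\<close> by simp
qed

lemma sum_indicator_grid_outside:
  fixes b :: "nat \<Rightarrow> real"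
  assumes mono: "\<And>j. b j \<le> b (Suc j)" and "r \<le> b 0 \<or> b m < r"
  shows "(\<Sum>j<m. c j * indicator {b j<..b (Suc j)} r) = (0 :: real)"
proof (intro sum.neutral ballI)
  fix j assume "j \<in> {..<m}"
  then have "b 0 \<le> b j" "b (Suc j) \<le> b m" using lift_Suc_mono_le[of b, OF mono] by auto
  then show "c j * indicator {b j<..b (Suc j)} r = 0" using assms by auto
qed

text \<open>The point 0 lies in no grid cell, whence the extra term at 0; it is harmless below, since
  {0} is a null set of the Stieltjes measure of a function vanishing at 0.\<close>

lemma grid_step_approx:
  fixes f :: "real \<Rightarrow> real" and b :: "nat \<Rightarrow> real"
  assumes mono: "\<And>j. b j \<le> b (Suc j)" and "b 0 = 0" "0 \<le> r"
    and vanish: "\<And>r. b m < r \<Longrightarrow> f r = 0"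
    and osc: "\<And>j r. j < m \<Longrightarrow> b j < r \<Longrightarrow> r \<le> b (Suc j) \<Longrightarrow> \<bar>f r - f (b j)\<bar> \<le> \<eta>"
  shows "\<bar>f r - (\<Sum>j<m. f (b j) * indicator {b j<..b (Suc j)} r)\<bar>
    \<le> \<eta> * indicator {0<..b m} r + \<bar>f 0\<bar> * indicator {0} r"
proof -
  consider "r = 0" | "0 < r" "r \<le> b m" | "b m < r" using \<open>0 \<le> r\<close> by linarith
  then show ?thesis
  proof cases
    case 2
    then obtain j where "j < m" "b j < r" "r \<le> b (Suc j)"
      using grid_cell_exists[of b, OF mono] \<open>b 0 = 0\<close> by metis
    then show ?thesis using 2 osc sum_indicator_grid_cell[of b, OF mono] by simp
  qed (use assms sum_indicator_grid_outside[of b, OF mono] in auto)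
qed

lemma weighted_sum_grid_approx:
  fixes I :: "'i set" and a :: "'i \<Rightarrow> real" and p :: "'i \<Rightarrow> real" and b :: "nat \<Rightarrow> real"
  assumes "finite I" and a: "\<And>i. i \<in> I \<Longrightarrow> 0 \<le> a i" and mono: "\<And>j. b j \<le> b (Suc j)"
    and F: "\<And>s. F s = (\<Sum>i\<in>{i\<in>I. p i \<le> s}. a i)"
    and osc: "\<And>j r. j < m \<Longrightarrow> b j < r \<Longrightarrow> r \<le> b (Suc j) \<Longrightarrow> \<bar>f r - f (b j)\<bar> \<le> \<eta>"
  shows "\<bar>(\<Sum>i\<in>{i\<in>I. p i \<le> b m}. a i * f (p i)) -
      ((\<Sum>i\<in>{i\<in>I. p i \<le> b 0}. a i * f (p i)) + stieltjes_sum f F b m)\<bar>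
    \<le> \<eta> * (F (b m) - F (b 0))"
  using osc
proof (induction m)
  case (Suc m)
  let ?S = "{i\<in>I. b m < p i \<and> p i \<le> b (Suc m)}"
  have split: "{i\<in>I. p i \<le> b (Suc m)} = {i\<in>I. p i \<le> b m} \<union> ?S"
    and disjoint: "{i\<in>I. p i \<le> b m} \<inter> ?S = {}"
    using mono[of m] by auto
  have sum_split: "(\<Sum>i\<in>{i\<in>I. p i \<le> b (Suc m)}. g i) = (\<Sum>i\<in>{i\<in>I. p i \<le> b m}. g i) + sum g ?S"
    for g :: "'i \<Rightarrow> real"
    unfolding split by (rule sum.union_disjoint) (use \<open>finite I\<close> disjoint in auto)
  have "\<bar>(\<Sum>i\<in>?S. a i * f (p i)) - f (b m) * sum a ?S\<bar> = \<bar>\<Sum>i\<in>?S. a i * (f (p i) - f (b m))\<bar>"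
    by (simp add: sum_distrib_left sum_subtractf algebra_simps)
  also have "\<dots> \<le> (\<Sum>i\<in>?S. a i * \<eta>)"
    using Suc.prems a
    by (intro sum_abs[THEN order_trans] sum_mono) (auto simp: abs_mult mult_left_mono)
  finally have cell: "\<bar>(\<Sum>i\<in>?S. a i * f (p i)) - f (b m) * sum a ?S\<bar> \<le> \<eta> * sum a ?S"
    by (simp add: sum_distrib_left mult.commute)
  have "F (b (Suc m)) = F (b m) + sum a ?S" unfolding F by (rule sum_split)
  then have "\<eta> * (F (b (Suc m)) - F (b 0)) = \<eta> * (F (b m) - F (b 0)) + \<eta> * sum a ?S"
    and "f (b m) * (F (b (Suc m)) - F (b m)) = f (b m) * sum a ?S"
    by (simp_all add: algebra_simps)
  moreover have "\<bar>(\<Sum>i\<in>{i\<in>I. p i \<le> b m}. a i * f (p i)) -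
      ((\<Sum>i\<in>{i\<in>I. p i \<le> b 0}. a i * f (p i)) + stieltjes_sum f F b m)\<bar>
    \<le> \<eta> * (F (b m) - F (b 0))"
    using Suc by simp
  ultimately show ?case
    unfolding sum_split stieltjes_sum_Suc using cell by linarith
qed (simp add: stieltjes_sum_def)

lemma weighted_sum_stieltjes_sum_approx:
  fixes I :: "'i set" and a :: "'i \<Rightarrow> real" and p :: "'i \<Rightarrow> real" and b :: "nat \<Rightarrow> real"
  assumes "finite I" and a: "\<And>i. i \<in> I \<Longrightarrow> 0 \<le> a i" and p: "\<And>i. i \<in> I \<Longrightarrow> 0 \<le> p i"
    and mono: "\<And>j. b j \<le> b (Suc j)" and "b 0 = 0" and "0 \<le> \<eta>"
    and F: "\<And>s. F s = (\<Sum>i\<in>{i\<in>I. p i \<le> s}. a i)"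
    and vanish: "\<And>r. b m < r \<Longrightarrow> f r = 0"
    and osc: "\<And>j r. j < m \<Longrightarrow> b j < r \<Longrightarrow> r \<le> b (Suc j) \<Longrightarrow> \<bar>f r - f (b j)\<bar> \<le> \<eta>"
  shows "\<bar>(\<Sum>i\<in>I. a i * f (p i)) - (f 0 * F 0 + stieltjes_sum f F b m)\<bar> \<le> \<eta> * F (b m)"
proof -
  have "a i * f (p i) = 0" if "i \<in> I - {i\<in>I. p i \<le> b m}" for i
    using that vanish by auto
  then have "(\<Sum>i\<in>I. a i * f (p i)) = (\<Sum>i\<in>{i\<in>I. p i \<le> b m}. a i * f (p i))"
    using \<open>finite I\<close> by (intro sum.mono_neutral_right) auto
  moreover have "(\<Sum>i\<in>{i\<in>I. p i \<le> b 0}. a i * f (p i)) = (\<Sum>i\<in>{i\<in>I. p i \<le> 0}. a i * f 0)"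
  proof (rule sum.cong)
    fix i assume "i \<in> {i\<in>I. p i \<le> 0}"
    then have "p i = 0" using p[of i] by simp
    then show "a i * f (p i) = a i * f 0" by simp
  qed (simp add: \<open>b 0 = 0\<close>)
  then have "(\<Sum>i\<in>{i\<in>I. p i \<le> b 0}. a i * f (p i)) = f 0 * F 0"
    unfolding F by (simp add: sum_distrib_left mult.commute)
  moreover have "0 \<le> F (b 0)" unfolding F using a by (intro sum_nonneg) auto
  then have "\<eta> * (F (b m) - F (b 0)) \<le> \<eta> * F (b m)"
    using \<open>0 \<le> \<eta>\<close> by (simp add: right_diff_distrib)
  ultimately show ?thesis
    using weighted_sum_grid_approx[where b=b and f=f and F=F and a=a and p=p and m=m and \<eta>=\<eta>,
      OF \<open>finite I\<close> a mono F osc] \<open>b 0 = 0\<close>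
    by simp
qed

text \<open>The library's \<^const>\<open>interval_measure\<close> needs a function on all of the reals, so q is
  extended by 0 to the negative half-line before restricting to [0, \<infinity>).\<close>

definition stieltjes_measure :: "(real \<Rightarrow> real) \<Rightarrow> real measure" where
  "stieltjes_measure q = restrict_space (interval_measure (\<lambda>s. if s < 0 then 0 else q s)) {0..}"

lemma sets_stieltjes_measure: "sets (stieltjes_measure q) = sets (restrict_space borel {0..})"
  by (simp add: stieltjes_measure_def sets_restrict_space)

lemma space_stieltjes_measure: "space (stieltjes_measure q) = {0..}"
  by (simp add: stieltjes_measure_def space_restrict_space)

lemma continuous_on_Ici_measurable_stieltjes:
  "continuous_on {0..} f \<Longrightarrow> (f :: real \<Rightarrow> real) \<in> borel_measurable (stieltjes_measure q)"
  using borel_measurable_continuous_on_restrict[of "{0::real..}" f]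
    measurable_cong_sets[OF sets_stieltjes_measure refl] by blast

locale nondecreasing_cadlag_0 = nondecreasing_cadlag +
  assumes at_0: "q 0 = 0"
begin

abbreviation \<mu> :: "real measure" where "\<mu> \<equiv> stieltjes_measure q"

lemma nonneg: "0 \<le> s \<Longrightarrow> 0 \<le> q s"
  using mono_le[of 0 s] at_0 by simp

lemma emeasure_Ioc_extension:
  assumes "c \<le> b"
  shows "emeasure (interval_measure (\<lambda>s. if s < 0 then 0 else q s)) {c<..b} =
    (if b < 0 then 0 else q b) - (if c < 0 then 0 else q c)"
proof (rule emeasure_interval_measure_Ioc[OF assms])
  show "(if x < 0 then 0 else q x) \<le> (if y < 0 then 0 else q y)" if "x \<le> y" for x y
    using that nonneg mono_le by auto
  show "continuous (at_right a) (\<lambda>s. if s < 0 then 0 else q s)" for a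
  proof (cases "a < 0")
    case True
    have "\<forall>\<^sub>F s in at_right a. (if s < 0 then 0 else q s) = 0"
      using True by (auto simp: eventually_at_right_field intro!: exI[of _ 0])
    then show ?thesis using True by (simp add: continuous_within tendsto_eventually)
  next
    case False
    have "\<forall>\<^sub>F s in at_right a. q s = (if s < 0 then 0 else q s)"
      using False by (auto simp: eventually_at_right_field intro!: exI[of _ "a + 1"])
    then show ?thesis
      using False tendsto_at_right[of a] by (simp add: continuous_within tendsto_cong)
  qed
qed

lemma emeasure_Ioc: "0 \<le> c \<Longrightarrow> c \<le> b \<Longrightarrow> emeasure \<mu> {c<..b} = q b - q c"
  unfolding stieltjes_measure_def
  by (subst emeasure_restrict_space) (auto simp: Int_absorb2 emeasure_Ioc_extension)

lemma emeasure_Icc: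
  assumes "0 \<le> s"
  shows "emeasure \<mu> {0..s} = q s"
proof -
  have "{0..s} = {0} \<union> {0<..s}" using assms by auto
  moreover have "emeasure \<mu> {0} = 0"
  proof -
    have "emeasure \<mu> {0} = emeasure (interval_measure (\<lambda>s. if s < 0 then 0 else q s)) {0}"
      unfolding stieltjes_measure_def by (subst emeasure_restrict_space) auto
    also have "\<dots> \<le> emeasure (interval_measure (\<lambda>s. if s < 0 then 0 else q s)) {-1<..0}"
      by (rule emeasure_mono) auto
    also have "\<dots> = 0" by (simp add: emeasure_Ioc_extension at_0)
    finally show ?thesis by simp
  qed
  moreover have "emeasure \<mu> ({0} \<union> {0<..s}) = emeasure \<mu> {0} + emeasure \<mu> {0<..s}"
    by (rule plus_emeasure[symmetric]) (auto simp: sets_stieltjes_measure sets_restrict_space_iff)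
  ultimately show ?thesis using emeasure_Ioc[of 0 s] assms at_0 by simp
qed

lemma emeasure_Icc_finite: "emeasure \<mu> {0..s} < \<infinity>"
  by (cases "0 \<le> s") (auto simp: emeasure_Icc)

lemma measure_Icc: "0 \<le> s \<Longrightarrow> measure \<mu> {0..s} = q s"
  using emeasure_Icc nonneg by (simp add: measure_def)

lemma measure_Ioc: "0 \<le> c \<Longrightarrow> c \<le> b \<Longrightarrow> measure \<mu> {c<..b} = q b - q c"
  using emeasure_Ioc mono_le by (simp add: measure_def)

lemma integrable_indicator:
  "A \<in> sets borel \<Longrightarrow> A \<subseteq> {0..b} \<Longrightarrow> integrable \<mu> (indicator A :: real \<Rightarrow> real)"
  by (rule integrable_indicator_Ici_measure[OF sets_stieltjes_measure emeasure_Icc_finite])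

lemma integral_grid_step:
  fixes b :: "nat \<Rightarrow> real" and f :: "real \<Rightarrow> real"
  assumes mono: "\<And>j. b j \<le> b (Suc j)" and "b 0 = 0"
  shows "integrable \<mu> (\<lambda>r. \<Sum>j<m. f (b j) * indicator {b j<..b (Suc j)} r)"
    and "(\<integral>r. (\<Sum>j<m. f (b j) * indicator {b j<..b (Suc j)} r) \<partial>\<mu>) = stieltjes_sum f q b m"
proof -
  have b_nonneg: "0 \<le> b j" for j using lift_Suc_mono_le[of b, OF mono, of 0 j] \<open>b 0 = 0\<close> by simp
  have cell: "integrable \<mu> (\<lambda>r. f (b j) * indicator {b j<..b (Suc j)} r)" for j
    using b_nonneg[of j] by (intro integrable_mult_right integrable_indicator) auto
  then show "integrable \<mu> (\<lambda>r. \<Sum>j<m. f (b j) * indicator {b j<..b (Suc j)} r)"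
    by (rule Bochner_Integration.integrable_sum)
  have "measure \<mu> ({b j<..b (Suc j)} \<inter> space \<mu>) = q (b (Suc j)) - q (b j)" for j
    using b_nonneg[of j] measure_Ioc[of "b j" "b (Suc j)"] mono[of j]
    by (simp add: space_stieltjes_measure Int_absorb2 subset_eq)
  then show "(\<integral>r. (\<Sum>j<m. f (b j) * indicator {b j<..b (Suc j)} r) \<partial>\<mu>) = stieltjes_sum f q b m"
    unfolding stieltjes_sum_def by (subst Bochner_Integration.integral_sum) (use cell in auto)
qed

lemma integral_stieltjes_sum_approx:
  fixes f :: "real \<Rightarrow> real" and b :: "nat \<Rightarrow> real"
  assumes "continuous_on {0..} f" and mono: "\<And>j. b j \<le> b (Suc j)" and "b 0 = 0" and "0 \<le> \<eta>"
    and vanish: "\<And>r. b m < r \<Longrightarrow> f r = 0"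
    and osc: "\<And>j r. j < m \<Longrightarrow> b j < r \<Longrightarrow> r \<le> b (Suc j) \<Longrightarrow> \<bar>f r - f (b j)\<bar> \<le> \<eta>"
  shows "integrable \<mu> f" and "\<bar>integral\<^sup>L \<mu> f - stieltjes_sum f q b m\<bar> \<le> \<eta> * q (b m)"
proof -
  define g where "g = (\<lambda>r. \<Sum>j<m. f (b j) * indicator {b j<..b (Suc j)} r)"
  define h where "h = (\<lambda>r. \<eta> * indicator {0<..b m} r + \<bar>f 0\<bar> * indicator {0} r)"
  have g: "integrable \<mu> g" "integral\<^sup>L \<mu> g = stieltjes_sum f q b m"
    unfolding g_def using integral_grid_step[OF mono \<open>b 0 = 0\<close>] by auto
  have b_nonneg: "0 \<le> b m" using lift_Suc_mono_le[of b, OF mono, of 0 m] \<open>b 0 = 0\<close> by simp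
  have "integrable \<mu> (indicator {0<..b m} :: real \<Rightarrow> real)"
    "integrable \<mu> (indicator {0} :: real \<Rightarrow> real)"
    using b_nonneg by (auto intro: integrable_indicator)
  moreover have "measure \<mu> {0<..b m} = q (b m)" "measure \<mu> {0} = 0"
    using measure_Ioc[of 0 "b m"] measure_Icc[of 0] b_nonneg by (simp_all add: at_0)
  ultimately have h: "integrable \<mu> h" "integral\<^sup>L \<mu> h = \<eta> * q (b m)"
    by (simp_all add: h_def space_stieltjes_measure Int_absorb2 subset_eq)
  have bound: "\<bar>f r - g r\<bar> \<le> h r" if "r \<in> space \<mu>" for r
    unfolding g_def h_def
    using that grid_step_approx[where b=b and f=f and m=m and \<eta>=\<eta>, OF mono \<open>b 0 = 0\<close> _ vanish osc]
    by (simp add: space_stieltjes_measure)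
  have f_minus_g: "integrable \<mu> (\<lambda>r. f r - g r)"
  proof (rule Bochner_Integration.integrable_bound[OF h(1)])
    show "(\<lambda>r. f r - g r) \<in> borel_measurable \<mu>"
      using continuous_on_Ici_measurable_stieltjes[OF assms(1)] borel_measurable_integrable[OF g(1)]
      by simp
    show "AE r in \<mu>. norm (f r - g r) \<le> norm (h r)"
      using bound by (intro AE_I2) (simp add: order.trans[OF _ abs_ge_self])
  qed
  then show f: "integrable \<mu> f"
    using Bochner_Integration.integrable_add[OF f_minus_g g(1)] by simp
  have "\<bar>integral\<^sup>L \<mu> f - integral\<^sup>L \<mu> g\<bar> = \<bar>integral\<^sup>L \<mu> (\<lambda>r. f r - g r)\<bar>"
    using f g by simp
  also have "\<dots> \<le> integral\<^sup>L \<mu> (\<lambda>r. norm (f r - g r))"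
    using integral_norm_bound[of \<mu> "\<lambda>r. f r - g r"] by simp
  also have "\<dots> \<le> integral\<^sup>L \<mu> h"
    using f_minus_g h bound by (intro integral_mono) auto
  finally show "\<bar>integral\<^sup>L \<mu> f - stieltjes_sum f q b m\<bar> \<le> \<eta> * q (b m)"
    using g h by simp
qed

end

section \<open>Time changes and partitions\<close>

lemma time_change_0: "time_change l \<Longrightarrow> l 0 = 0"
  by (simp add: time_change_def)

lemma time_change_less: "time_change l \<Longrightarrow> 0 \<le> s \<Longrightarrow> s < s' \<Longrightarrow> l s < l s'"
  by (simp add: time_change_def strict_mono_on_def)

lemma time_change_le: "time_change l \<Longrightarrow> 0 \<le> s \<Longrightarrow> s \<le> s' \<Longrightarrow> l s \<le> l s'"
  using time_change_less[of l s s'] by (cases "s = s'") auto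

lemma time_change_nonneg: "time_change l \<Longrightarrow> 0 \<le> s \<Longrightarrow> 0 \<le> l s"
  by (auto simp: time_change_def)

lemma time_change_surj: "time_change l \<Longrightarrow> 0 \<le> y \<Longrightarrow> \<exists>s\<ge>0. l s = y"
  unfolding time_change_def by (metis atLeast_iff imageE)

locale partition_sequence =
  fixes k :: "nat \<Rightarrow> nat" and t :: "nat \<Rightarrow> nat \<Rightarrow> real"
  assumes partition: "partition_seq k t"
begin

lemma t_0: "t n 0 = 0"
  using partition by (simp add: partition_seq_def)

lemma t_less_Suc: "i < k n \<Longrightarrow> t n i < t n (Suc i)"
  using partition by (simp add: partition_seq_def)

lemma t_less: "i < j \<Longrightarrow> j \<le> k n \<Longrightarrow> t n i < t n j"
proof (induction j)
  case (Suc j)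
  then show ?case using t_less_Suc[of j n] by (cases "i = j") auto
qed simp

lemma t_le: "i \<le> j \<Longrightarrow> j \<le> k n \<Longrightarrow> t n i \<le> t n j"
  using t_less[of i j n] by (cases "i = j") auto

lemma t_nonneg: "i \<le> k n \<Longrightarrow> 0 \<le> t n i"
  using t_le[of 0 i n] t_0 by simp

lemma t_inj: "i \<le> k n \<Longrightarrow> j \<le> k n \<Longrightarrow> t n i = t n j \<Longrightarrow> i = j"
  using t_less[of i j n] t_less[of j i n] by (cases i j rule: linorder_cases) auto

lemma eventually_mesh_less:
  "0 < \<epsilon> \<Longrightarrow> \<forall>\<^sub>F n in sequentially. \<forall>i<k n. t n i \<le> T \<longrightarrow> t n (Suc i) - t n i < \<epsilon>"
  using partition by (simp add: partition_seq_def)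

lemma eventually_last_ge: "\<forall>\<^sub>F n in sequentially. T \<le> t n (k n)"
  using partition unfolding partition_seq_def by (simp add: filterlim_at_top)

lemma t_1_tendsto_0: "(\<lambda>n. t n 1) \<longlonglongrightarrow> 0"
  unfolding tendsto_iff dist_real_def
proof (intro allI impI)
  fix \<epsilon> :: real assume "0 < \<epsilon>"
  show "\<forall>\<^sub>F n in sequentially. \<bar>t n 1 - 0\<bar> < \<epsilon>"
    using eventually_last_ge[of 1] eventually_mesh_less[OF \<open>0 < \<epsilon>\<close>, of 0]
  proof eventually_elim
    case (elim n)
    then have "0 < k n" using t_0[of n] by (cases "k n") auto
    then show ?case using elim t_less_Suc[of 0 n] t_0[of n] by auto
  qed
qed

definition cell_index :: "real \<Rightarrow> nat \<Rightarrow> nat" where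
  "cell_index u n = Max {i. i \<le> k n \<and> t n i < u}"

lemma cell_index:
  assumes "0 < u" "u \<le> t n (k n)"
  shows "cell_index u n < k n" and "t n (cell_index u n) < u" and "u \<le> t n (Suc (cell_index u n))"
    and "\<And>i. i \<le> k n \<Longrightarrow> t n i < u \<Longrightarrow> i \<le> cell_index u n"
proof -
  have "0 \<in> {i. i \<le> k n \<and> t n i < u}" using assms t_0[of n] by simp
  then have mem: "cell_index u n \<in> {i. i \<le> k n \<and> t n i < u}"
    unfolding cell_index_def by (intro Max_in) auto
  show le: "\<And>i. i \<le> k n \<Longrightarrow> t n i < u \<Longrightarrow> i \<le> cell_index u n"
    unfolding cell_index_def by simp
  show "t n (cell_index u n) < u" using mem by simp
  show less: "cell_index u n < k n" using mem assms by (cases "cell_index u n = k n") auto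
  show "u \<le> t n (Suc (cell_index u n))"
    using le[of "Suc (cell_index u n)"] less by force
qed

lemma eventually_cell_index:
  assumes "0 < u"
  shows "\<forall>\<^sub>F n in sequentially. cell_index u n < k n \<and> t n (cell_index u n) < u \<and>
    u \<le> t n (Suc (cell_index u n))"
  using eventually_last_ge[of u] by eventually_elim (use cell_index[OF assms] in auto)

lemma cell_index_tendsto:
  assumes "0 < u"
  shows "(\<lambda>n. t n (cell_index u n)) \<longlonglongrightarrow> u" and "(\<lambda>n. t n (Suc (cell_index u n))) \<longlonglongrightarrow> u"
proof -
  have close: "\<forall>\<^sub>F n in sequentially. u - \<epsilon> < t n (cell_index u n) \<and> t n (cell_index u n) < u \<and>
      u \<le> t n (Suc (cell_index u n)) \<and> t n (Suc (cell_index u n)) < u + \<epsilon>" if "0 < \<epsilon>" for \<epsilon>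
    using eventually_cell_index[OF assms] eventually_mesh_less[OF that, of u]
    by eventually_elim force
  show "(\<lambda>n. t n (cell_index u n)) \<longlonglongrightarrow> u" "(\<lambda>n. t n (Suc (cell_index u n))) \<longlonglongrightarrow> u"
    unfolding tendsto_iff dist_real_def
    by (auto elim!: eventually_mono[OF close])
qed

lemma exists_gap_below:
  assumes "0 < w"
  obtains y where "0 < y" "y < w" "\<And>i. i \<le> k n \<Longrightarrow> t n i < w \<Longrightarrow> t n i < y"
proof -
  define P where "P = insert (w / 2) {t n i | i. i \<le> k n \<and> t n i < w}"
  have "finite P" unfolding P_def by simp
  have "Max P < w" using \<open>finite P\<close> assms by (subst Max_less_iff) (auto simp: P_def)
  moreover have "w / 2 \<le> Max P" by (rule Max_ge[OF \<open>finite P\<close>]) (simp add: P_def)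
  moreover have "t n i \<le> Max P" if "i \<le> k n" "t n i < w" for i
    by (rule Max_ge[OF \<open>finite P\<close>]) (use that in \<open>auto simp: P_def\<close>)
  ultimately show ?thesis using assms by (intro that[of "(Max P + w) / 2"]) force+
qed

lemma qv_approx_diff:
  assumes "s \<le> s'"
  shows "qv_approx k t x n s' - qv_approx k t x n s =
    (\<Sum>i\<in>{i. i < k n \<and> s < t n i \<and> t n i \<le> s'}. (x (t n (Suc i)) - x (t n i))\<^sup>2)"
proof -
  have split: "{i. i < k n \<and> t n i \<le> s'} =
      {i. i < k n \<and> t n i \<le> s} \<union> {i. i < k n \<and> s < t n i \<and> t n i \<le> s'}"
    using assms by auto
  have "qv_approx k t x n s' = qv_approx k t x n s +
      (\<Sum>i\<in>{i. i < k n \<and> s < t n i \<and> t n i \<le> s'}. (x (t n (Suc i)) - x (t n i))\<^sup>2)"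
    unfolding qv_approx_def split by (rule sum.union_disjoint) auto
  then show ?thesis by simp
qed

lemma qv_approx_nonneg: "0 \<le> qv_approx k t x n s"
  unfolding qv_approx_def by (simp add: sum_nonneg)

lemma qv_approx_mono_le:
  assumes "s \<le> s'"
  shows "qv_approx k t x n s \<le> qv_approx k t x n s'"
proof -
  have "0 \<le> (\<Sum>i\<in>{i. i < k n \<and> s < t n i \<and> t n i \<le> s'}. (x (t n (Suc i)) - x (t n i))\<^sup>2)"
    by (simp add: sum_nonneg)
  then show ?thesis using qv_approx_diff[OF assms, of x n] by linarith
qed

lemma sq_increment_le_qv_approx_diff:
  assumes "i < k n" "s < t n i" "t n i \<le> s'"
  shows "(x (t n (Suc i)) - x (t n i))\<^sup>2 \<le> qv_approx k t x n s' - qv_approx k t x n s"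
  unfolding qv_approx_diff[of s s', OF less_le_trans[OF assms(2,3), THEN less_imp_le]]
  by (rule member_le_sum) (use assms in auto)

lemma qv_approx_diff_across_gap:
  assumes "y \<le> w" and gap: "\<And>i. i \<le> k n \<Longrightarrow> t n i < w \<Longrightarrow> t n i < y"
    and bound: "\<And>i. i < k n \<Longrightarrow> t n i = w \<Longrightarrow> (x (t n (Suc i)) - x (t n i))\<^sup>2 \<le> B" and "0 \<le> B"
  shows "qv_approx k t x n w - qv_approx k t x n y \<le> B"
proof (cases "\<exists>i<k n. t n i = w")
  case True
  then obtain i where i: "i < k n" "t n i = w" by blast
  have "{j. j < k n \<and> y < t n j \<and> t n j \<le> w} \<subseteq> {i}"
    using gap i t_inj[of _ n i] by (force simp: order.order_iff_strict)
  then have "qv_approx k t x n w - qv_approx k t x n y \<le> (\<Sum>j\<in>{i}. (x (t n (Suc j)) - x (t n j))\<^sup>2)"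
    unfolding qv_approx_diff[OF \<open>y \<le> w\<close>] by (intro sum_mono2) auto
  moreover have "(\<Sum>j\<in>{i}. (x (t n (Suc j)) - x (t n j))\<^sup>2) \<le> B" using bound[OF i] by simp
  ultimately show ?thesis by linarith
next
  case False
  then have no_points: "{j. j < k n \<and> y < t n j \<and> t n j \<le> w} = {}"
    using gap by (force simp: order.order_iff_strict)
  show ?thesis unfolding qv_approx_diff[OF \<open>y \<le> w\<close>] no_points using \<open>0 \<le> B\<close> by simp
qed

lemma qv_measure_int_stieltjes_sum_approx:
  fixes f :: "real \<Rightarrow> real" and b :: "nat \<Rightarrow> real"
  assumes mono: "\<And>j. b j \<le> b (Suc j)" and "b 0 = 0" and "0 \<le> \<eta>"
    and vanish: "\<And>r. b m < r \<Longrightarrow> f r = 0"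
    and osc: "\<And>j r. j < m \<Longrightarrow> b j < r \<Longrightarrow> r \<le> b (Suc j) \<Longrightarrow> \<bar>f r - f (b j)\<bar> \<le> \<eta>"
  shows "\<bar>qv_measure_int k t x n f -
      (f 0 * qv_approx k t x n 0 + stieltjes_sum f (qv_approx k t x n) b m)\<bar>
    \<le> \<eta> * qv_approx k t x n (b m)"
proof -
  have "qv_approx k t x n s = (\<Sum>i\<in>{i\<in>{..<k n}. t n i \<le> s}. (x (t n (Suc i)) - x (t n i))\<^sup>2)" for s
    unfolding qv_approx_def by (intro sum.cong) auto
  then show ?thesis
    unfolding qv_measure_int_def using t_nonneg
    by (intro weighted_sum_stieltjes_sum_approx[where I="{..<k n}" and p="t n" and b=b and f=f
          and a="\<lambda>i. (x (t n (Suc i)) - x (t n i))\<^sup>2" and m=m and \<eta>=\<eta>,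
          OF _ _ _ mono \<open>b 0 = 0\<close> \<open>0 \<le> \<eta>\<close> _ vanish osc]) auto
qed

end

section \<open>Limits of the discrete quadratic variation\<close>

lemma continuous_on_Icc_modulus:
  fixes f :: "real \<Rightarrow> real"
  assumes "continuous_on {a..b} f" "0 < \<eta>"
  obtains \<delta> where "0 < \<delta>" "\<delta> \<le> 1"
    "\<And>r r'. r \<in> {a..b} \<Longrightarrow> r' \<in> {a..b} \<Longrightarrow> \<bar>r' - r\<bar> < \<delta> \<Longrightarrow> \<bar>f r' - f r\<bar> \<le> \<eta>"
proof -
  obtain d where "0 < d"
    and "\<And>r r'. r \<in> {a..b} \<Longrightarrow> r' \<in> {a..b} \<Longrightarrow> dist r' r < d \<Longrightarrow> dist (f r') (f r) < \<eta>"
    using compact_uniformly_continuous[OF assms(1) compact_Icc] \<open>0 < \<eta>\<close>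
    unfolding uniformly_continuous_on_def by metis
  then show ?thesis by (intro that[of "min d 1"]) (auto simp: dist_real_def less_imp_le)
qed

lemma uniform_grid_exists:
  assumes "0 < T" "0 < \<delta>"
  obtains m :: nat and h :: real where "0 < h" "h < \<delta>" "real m * h = T"
proof -
  obtain m :: nat where m: "T / \<delta> < real m" using reals_Archimedean2 by blast
  moreover have "0 < T / \<delta>" using assms by simp
  ultimately have "0 < real m" by linarith
  moreover have "T / real m < \<delta>" using m assms \<open>0 < real m\<close> by (simp add: field_simps)
  ultimately show ?thesis using assms by (intro that[of "T / real m" m]) auto
qed

lemma fine_grid_exists:
  fixes f :: "real \<Rightarrow> real"
  assumes f: "continuous_on {0..} f" and vanish: "\<And>r. T - 1 \<le> r \<Longrightarrow> f r = 0"
    and "1 \<le> T" "0 < \<eta>"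
  obtains \<delta> :: real and s :: "nat \<Rightarrow> real" and m :: nat
  where "0 < \<delta>" "s 0 = 0" "s m = T" "\<And>j. s j \<le> s (Suc j)" "\<And>j. s (Suc j) - s j < \<delta> / 2"
    "\<And>r. s m - \<delta> / 4 < r \<Longrightarrow> f r = 0"
    "\<And>r r'. 0 \<le> r \<Longrightarrow> r < r' \<Longrightarrow> r' < s m + \<delta> / 4 \<Longrightarrow> r' - r < \<delta> \<Longrightarrow> \<bar>f r' - f r\<bar> \<le> \<eta>"
proof -
  have "continuous_on {0..T + 1} f" using f by (rule continuous_on_subset) auto
  then obtain \<delta> where "0 < \<delta>" "\<delta> \<le> 1"
    and osc: "\<And>r r'. r \<in> {0..T + 1} \<Longrightarrow> r' \<in> {0..T + 1} \<Longrightarrow> \<bar>r' - r\<bar> < \<delta> \<Longrightarrow> \<bar>f r' - f r\<bar> \<le> \<eta>"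
    using continuous_on_Icc_modulus \<open>0 < \<eta>\<close> by blast
  obtain m :: nat and h where "0 < h" "h < \<delta> / 2" "real m * h = T"
    by (rule uniform_grid_exists[of T "\<delta> / 2"]) (use \<open>0 < \<delta>\<close> \<open>1 \<le> T\<close> in auto)
  show ?thesis
  proof (rule that[of \<delta> "\<lambda>j. real j * h" m])
    show "real j * h \<le> real (Suc j) * h" "real (Suc j) * h - real j * h < \<delta> / 2" for j
      using \<open>0 < h\<close> \<open>h < \<delta> / 2\<close> by (simp_all add: algebra_simps)
    show "f r = 0" if "real m * h - \<delta> / 4 < r" for r
      using that \<open>\<delta> \<le> 1\<close> \<open>real m * h = T\<close> by (intro vanish) auto
    show "\<bar>f r' - f r\<bar> \<le> \<eta>" if "0 \<le> r" "r < r'" "r' < real m * h + \<delta> / 4" "r' - r < \<delta>" for r r'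
      using that \<open>\<delta> \<le> 1\<close> \<open>real m * h = T\<close> by (intro osc) auto
  qed (use \<open>0 < \<delta>\<close> \<open>real m * h = T\<close> in auto)
qed

locale qv_skorokhod_limit = partition_sequence +
  fixes x q :: "real \<Rightarrow> real" and l :: "nat \<Rightarrow> real \<Rightarrow> real"
  assumes cadlag_x: "cadlag x" and cadlag_q: "cadlag q"
    and time_change: "\<And>n. time_change (l n)"
    and time_change_uniform: "\<And>\<epsilon>. 0 < \<epsilon> \<Longrightarrow> \<forall>\<^sub>F n in sequentially. \<forall>s\<ge>0. \<bar>l n s - s\<bar> < \<epsilon>"
    and qv_approx_uniform: "\<And>N \<epsilon>. 0 < \<epsilon> \<Longrightarrow>
      \<forall>\<^sub>F n in sequentially. \<forall>s\<in>{0..N}. \<bar>qv_approx k t x n (l n s) - q s\<bar> < \<epsilon>"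
begin

abbreviation Q :: "nat \<Rightarrow> real \<Rightarrow> real" where "Q n \<equiv> qv_approx k t x n"

lemma time_change_tendsto:
  assumes "0 \<le> s"
  shows "(\<lambda>n. l n s) \<longlonglongrightarrow> s"
proof (unfold tendsto_iff dist_real_def, intro allI impI)
  fix \<epsilon> :: real assume "0 < \<epsilon>"
  show "\<forall>\<^sub>F n in sequentially. \<bar>l n s - s\<bar> < \<epsilon>"
    using time_change_uniform[OF \<open>0 < \<epsilon>\<close>] by (rule eventually_mono) (use assms in auto)
qed

lemma Q_time_change_tendsto:
  assumes "0 \<le> s"
  shows "(\<lambda>n. Q n (l n s)) \<longlonglongrightarrow> q s"
proof (unfold tendsto_iff dist_real_def, intro allI impI)
  fix \<epsilon> :: real assume "0 < \<epsilon>"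
  show "\<forall>\<^sub>F n in sequentially. \<bar>Q n (l n s) - q s\<bar> < \<epsilon>"
    using qv_approx_uniform[OF \<open>0 < \<epsilon>\<close>, of s] by (rule eventually_mono) (use assms in auto)
qed

lemma q_nonneg: "0 \<le> s \<Longrightarrow> 0 \<le> q s"
  by (rule LIMSEQ_le_const[OF Q_time_change_tendsto]) (auto intro: qv_approx_nonneg)

lemma q_mono_le: "0 \<le> s \<Longrightarrow> s \<le> s' \<Longrightarrow> q s \<le> q s'"
  using Q_time_change_tendsto qv_approx_mono_le time_change_le[OF time_change]
  by (intro LIMSEQ_le[OF Q_time_change_tendsto Q_time_change_tendsto]) auto

lemma x_continuous_from_right: "0 \<le> u \<Longrightarrow> continuous (at u within {u..}) x"
  using cadlag_x by (simp add: cadlag_def continuous_within at_within_Ici_at_right)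

lemma x_tendsto_left_lim: "0 < u \<Longrightarrow> (x \<longlongrightarrow> Lim (at_left u) x) (at_left u)"
  using cadlag_x unfolding cadlag_def by (metis tendsto_Lim trivial_limit_at_left_real)

lemma q_0: "q 0 = 0"
proof -
  have k_pos: "\<forall>\<^sub>F n in sequentially. 0 < k n"
    using eventually_last_ge[of 1] by eventually_elim (metis t_0 gr0I zero_less_one not_le)
  have "Q n 0 = (x (t n 1) - x 0)\<^sup>2" if "0 < k n" for n
  proof -
    have "{i. i < k n \<and> t n i \<le> 0} = {0}"
    proof safe
      fix i assume "i < k n" "t n i \<le> 0"
      then show "i = 0" using t_less[of 0 i n] t_0[of n] by (cases "i = 0") auto
    qed (use that t_0 in auto)
    then show ?thesis by (simp add: qv_approx_def t_0)
  qed
  then have Q_0: "\<forall>\<^sub>F n in sequentially. (x (t n 1) - x 0)\<^sup>2 = Q n 0"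
    using k_pos by (auto elim: eventually_mono)
  have "(\<lambda>n. x (t n 1)) \<longlonglongrightarrow> x 0"
    using k_pos
    by (intro continuous_within_tendsto_compose[OF x_continuous_from_right _ t_1_tendsto_0])
      (auto elim!: eventually_mono intro: t_nonneg)
  then have "(\<lambda>n. (x (t n 1) - x 0)\<^sup>2) \<longlonglongrightarrow> 0"
    by (auto intro!: tendsto_eq_intros)
  then have "(\<lambda>n. Q n 0) \<longlonglongrightarrow> 0"
    using Q_0 by (rule Lim_transform_eventually)
  moreover have "(\<lambda>n. Q n 0) \<longlonglongrightarrow> q 0"
    using Q_time_change_tendsto[of 0] by (simp add: time_change_0[OF time_change])
  ultimately show ?thesis using LIMSEQ_unique by blast
qed

sublocale nondecreasing_cadlag_0 q
  using cadlag_q q_mono_le q_0 by unfold_locales (auto simp: mono_on_def)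

lemma sq_increment_cell_index_tendsto:
  assumes "0 < u"
  shows "(\<lambda>n. (x (t n (Suc (cell_index u n))) - x (t n (cell_index u n)))\<^sup>2) \<longlonglongrightarrow> (jump x u)\<^sup>2"
proof -
  have "(\<lambda>n. x (t n (Suc (cell_index u n)))) \<longlonglongrightarrow> x u"
    using eventually_cell_index[OF assms] assms
    by (intro continuous_within_tendsto_compose[OF x_continuous_from_right _ cell_index_tendsto(2)])
      (auto elim!: eventually_mono)
  moreover have "(\<lambda>n. x (t n (cell_index u n))) \<longlonglongrightarrow> Lim (at_left u) x"
    using eventually_cell_index[OF assms]
    by (intro filterlim_compose[OF x_tendsto_left_lim[OF assms]]
        tendsto_imp_filterlim_at_left[OF cell_index_tendsto(1)[OF assms]])
      (auto elim!: eventually_mono)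
  ultimately show ?thesis using assms by (auto simp: jump_def intro!: tendsto_eq_intros)
qed

lemma sq_jump_le_increase:
  assumes "0 \<le> r" "r < u" "u < s"
  shows "(jump x u)\<^sup>2 \<le> q s - q r"
proof -
  have "0 < u" using assms by linarith
  have "\<forall>\<^sub>F n in sequentially. l n r < (r + u) / 2"
    using assms by (intro order_tendstoD(2)[OF time_change_tendsto]) auto
  moreover have "\<forall>\<^sub>F n in sequentially. (r + u) / 2 < t n (cell_index u n)"
    using assms by (intro order_tendstoD(1)[OF cell_index_tendsto(1)[OF \<open>0 < u\<close>]]) auto
  moreover have "\<forall>\<^sub>F n in sequentially. u < l n s"
    using assms by (intro order_tendstoD(1)[OF time_change_tendsto]) auto
  ultimately have "\<forall>\<^sub>F n in sequentially. (x (t n (Suc (cell_index u n))) - x (t n (cell_index u n)))\<^sup>2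
      \<le> Q n (l n s) - Q n (l n r)"
    using eventually_cell_index[OF \<open>0 < u\<close>]
    by eventually_elim (auto intro!: sq_increment_le_qv_approx_diff)
  moreover have "(\<lambda>n. Q n (l n s) - Q n (l n r)) \<longlonglongrightarrow> q s - q r"
    using assms by (intro tendsto_diff Q_time_change_tendsto) auto
  ultimately show ?thesis
    using tendsto_le[OF trivial_limit_sequentially _ sq_increment_cell_index_tendsto[OF \<open>0 < u\<close>]]
    by blast
qed

lemma sq_jump_le_jump: "(jump x u)\<^sup>2 \<le> jump q u"
proof (cases "0 < u")
  case True
  have "(jump x u)\<^sup>2 + q r \<le> q u" if "0 \<le> r" "r < u" for r
  proof (rule tendsto_lowerbound[OF tendsto_at_right])
    show "\<forall>\<^sub>F s in at_right u. (jump x u)\<^sup>2 + q r \<le> q s"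
      using sq_jump_le_increase[OF that]
      by (force simp: eventually_at_right_field algebra_simps intro!: exI[of _ "u + 1"])
  qed (use that in auto)
  then have "Lim (at_left u) q \<le> q u - (jump x u)\<^sup>2"
    using True
    by (intro tendsto_upperbound[OF tendsto_left_lim])
      (auto simp: eventually_at_left_field algebra_simps intro!: exI[of _ 0])
  then show ?thesis using True by (simp add: jump_def)
qed (simp add: jump_def)

text \<open>Near a time u > 0, the only squared increment that can be large is the one over the
  partition interval containing u; by right continuity and existence of left limits all
  others are eventually small.\<close>

lemma eventually_sq_increment_near_le:
  assumes "0 < u" "0 < \<epsilon>"
  obtains \<eta> where "0 < \<eta>" "\<forall>\<^sub>F n in sequentially. \<forall>i<k n. \<bar>t n i - u\<bar> < \<eta> \<longrightarrow>
    (x (t n (Suc i)) - x (t n i))\<^sup>2 \<le> (jump x u)\<^sup>2 + \<epsilon>"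
proof -
  define \<rho> where "\<rho> = sqrt \<epsilon> / 2"
  have "0 < \<rho>" using assms by (simp add: \<rho>_def)
  have small: "(x b - x a)\<^sup>2 \<le> (jump x u)\<^sup>2 + \<epsilon>" if "\<bar>x b - c\<bar> < \<rho>" "\<bar>x a - c\<bar> < \<rho>" for a b c
    using sq_diff_le_if_near[OF \<open>0 < \<epsilon>\<close>, of "x a" c "x b"] that by (simp add: \<rho>_def add_increasing)
  obtain \<eta>\<^sub>x where "0 < \<eta>\<^sub>x"
    and right: "\<And>y. u \<le> y \<Longrightarrow> y < u + \<eta>\<^sub>x \<Longrightarrow> \<bar>x y - x u\<bar> < \<rho>"
    and left: "\<And>y. u - \<eta>\<^sub>x < y \<Longrightarrow> y < u \<Longrightarrow> \<bar>x y - Lim (at_left u) x\<bar> < \<rho>"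
    using cadlag_oscillation_near[OF cadlag_x assms(1) \<open>0 < \<rho>\<close>] by blast
  define \<eta> where "\<eta> = \<eta>\<^sub>x / 2"
  have "0 < \<eta>" using \<open>0 < \<eta>\<^sub>x\<close> by (simp add: \<eta>_def)
  have "\<forall>\<^sub>F n in sequentially.
      (x (t n (Suc (cell_index u n))) - x (t n (cell_index u n)))\<^sup>2 < (jump x u)\<^sup>2 + \<epsilon>"
    using assms by (intro order_tendstoD(2)[OF sq_increment_cell_index_tendsto]) auto
  then have "\<forall>\<^sub>F n in sequentially. \<forall>i<k n. \<bar>t n i - u\<bar> < \<eta> \<longrightarrow>
      (x (t n (Suc i)) - x (t n i))\<^sup>2 \<le> (jump x u)\<^sup>2 + \<epsilon>"
    using eventually_mesh_less[OF \<open>0 < \<eta>\<close>, of "u + \<eta>"] eventually_cell_index[OF assms(1)]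
      eventually_last_ge[of u]
  proof eventually_elim
    case (elim n)
    show ?case
    proof (intro allI impI)
      fix i assume i: "i < k n" "\<bar>t n i - u\<bar> < \<eta>"
      have step: "t n i < t n (Suc i)" "t n (Suc i) - t n i < \<eta>" using elim(2) i t_less_Suc by auto
      consider "u \<le> t n i" | "i = cell_index u n" | "t n i < u" "i \<noteq> cell_index u n" by linarith
      then show "(x (t n (Suc i)) - x (t n i))\<^sup>2 \<le> (jump x u)\<^sup>2 + \<epsilon>"
      proof cases
        case 1
        then show ?thesis using i step right \<eta>_def by (intro small[where c="x u"]) auto
      next
        case 2
        then show ?thesis using elim(1) by simp
      next
        case 3
        then have "Suc i \<le> cell_index u n" using cell_index(4)[OF assms(1) elim(4), of i] i by simp
        then have "t n (Suc i) < u" using t_le[of "Suc i" "cell_index u n" n] elim(3) by auto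
        then show ?thesis
          using 3 i step left \<eta>_def by (intro small[where c="Lim (at_left u) x"]) auto
      qed
    qed
  qed
  with \<open>0 < \<eta>\<close> show ?thesis by (rule that)
qed

lemma jump_le_sq_jump:
  assumes "0 < u"
  shows "jump q u \<le> (jump x u)\<^sup>2"
proof (rule field_le_epsilon)
  fix e :: real assume "0 < e"
  define \<epsilon> where "\<epsilon> = e / 3"
  have "0 < \<epsilon>" using \<open>0 < e\<close> by (simp add: \<epsilon>_def)
  obtain \<eta> where "0 < \<eta>" and near: "\<forall>\<^sub>F n in sequentially. \<forall>i<k n. \<bar>t n i - u\<bar> < \<eta> \<longrightarrow>
      (x (t n (Suc i)) - x (t n i))\<^sup>2 \<le> (jump x u)\<^sup>2 + \<epsilon>"
    using eventually_sq_increment_near_le[OF assms \<open>0 < \<epsilon>\<close>] by blast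
  have "\<forall>\<^sub>F n in sequentially. (\<forall>s\<ge>0. \<bar>l n s - s\<bar> < \<eta>) \<and>
      (\<forall>s\<in>{0..u}. \<bar>Q n (l n s) - q s\<bar> < \<epsilon>) \<and>
      (\<forall>i<k n. \<bar>t n i - u\<bar> < \<eta> \<longrightarrow> (x (t n (Suc i)) - x (t n i))\<^sup>2 \<le> (jump x u)\<^sup>2 + \<epsilon>)"
    by (rule eventually_conj[OF time_change_uniform[OF \<open>0 < \<eta>\<close>]
          eventually_conj[OF qv_approx_uniform[OF \<open>0 < \<epsilon>\<close>, of u] near]])
  then obtain n where "\<forall>s\<ge>0. \<bar>l n s - s\<bar> < \<eta>" and Q_close: "\<forall>s\<in>{0..u}. \<bar>Q n (l n s) - q s\<bar> < \<epsilon>"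
    and near_n: "\<forall>i<k n. \<bar>t n i - u\<bar> < \<eta> \<longrightarrow> (x (t n (Suc i)) - x (t n i))\<^sup>2 \<le> (jump x u)\<^sup>2 + \<epsilon>"
    using eventually_happens'[OF sequentially_bot] by blast
  then have l_close: "\<bar>l n u - u\<bar> < \<eta>" using assms by simp
  define w where "w = l n u"
  have "0 < w"
    using time_change_less[OF time_change, of 0 u n] time_change_0[OF time_change] assms
    by (simp add: w_def)
  then obtain y where "0 < y" "y < w" and gap: "\<And>i. i \<le> k n \<Longrightarrow> t n i < w \<Longrightarrow> t n i < y"
    using exists_gap_below by blast
  obtain \<tau> where "0 \<le> \<tau>" "l n \<tau> = y" using time_change_surj[OF time_change, of y] \<open>0 < y\<close> by auto
  have "\<tau> < u"
    using time_change_le[OF time_change, of u \<tau> n] \<open>l n \<tau> = y\<close> \<open>y < w\<close> assms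
    unfolding w_def by (cases "\<tau> < u") auto
  have "Q n w - Q n y \<le> (jump x u)\<^sup>2 + \<epsilon>"
    using \<open>y < w\<close> gap near_n l_close \<open>0 < \<epsilon>\<close>
    by (intro qv_approx_diff_across_gap) (auto simp: w_def)
  moreover have "\<bar>Q n w - q u\<bar> < \<epsilon>" "\<bar>Q n y - q \<tau>\<bar> < \<epsilon>"
    using Q_close \<open>0 \<le> \<tau>\<close> \<open>\<tau> < u\<close> assms \<open>l n \<tau> = y\<close> by (auto simp: w_def)
  moreover have "jump q u \<le> q u - q \<tau>"
    using le_left_lim[OF \<open>0 \<le> \<tau>\<close> \<open>\<tau> < u\<close>] assms by (simp add: jump_def)
  ultimately show "jump q u \<le> (jump x u)\<^sup>2 + e" unfolding \<epsilon>_def by linarith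
qed

lemma jump_eq_sq_jump: "jump q u = (jump x u)\<^sup>2"
  using jump_le_sq_jump[of u] sq_jump_le_jump[of u] by (cases "0 < u") (auto simp: jump_def)

lemma stieltjes_sum_time_change_tendsto:
  assumes f: "continuous_on {0..} f" and s: "\<And>j. 0 \<le> s j"
  shows "(\<lambda>n. f 0 * Q n 0 + stieltjes_sum f (Q n) (\<lambda>j. l n (s j)) m) \<longlonglongrightarrow> stieltjes_sum f q s m"
proof -
  have "(\<lambda>n. f (l n (s j))) \<longlonglongrightarrow> f (s j)" for j
    using s time_change_nonneg[OF time_change]
    by (intro continuous_on_tendsto_compose[OF f time_change_tendsto]) auto
  moreover have "(\<lambda>n. Q n 0) \<longlonglongrightarrow> 0"
    using Q_time_change_tendsto[of 0] by (simp add: time_change_0[OF time_change] q_0)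
  ultimately show ?thesis
    unfolding stieltjes_sum_def using s by (auto intro!: tendsto_eq_intros Q_time_change_tendsto)
qed

lemma qv_measure_int_time_changed_grid_approx:
  fixes f :: "real \<Rightarrow> real" and s :: "nat \<Rightarrow> real"
  assumes mono: "\<And>j. s j \<le> s (Suc j)" and "s 0 = 0" and "0 \<le> \<eta>"
    and mesh: "\<And>j. s (Suc j) - s j < \<delta> / 2"
    and l_close: "\<forall>r\<ge>0. \<bar>l n r - r\<bar> < \<delta> / 4"
    and vanish: "\<And>r. s m - \<delta> / 4 < r \<Longrightarrow> f r = 0"
    and osc: "\<And>r r'. 0 \<le> r \<Longrightarrow> r < r' \<Longrightarrow> r' < s m + \<delta> / 4 \<Longrightarrow> r' - r < \<delta> \<Longrightarrow> \<bar>f r' - f r\<bar> \<le> \<eta>"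
  shows "\<bar>qv_measure_int k t x n f - (f 0 * Q n 0 + stieltjes_sum f (Q n) (\<lambda>j. l n (s j)) m)\<bar>
    \<le> \<eta> * Q n (l n (s m))"
proof (rule qv_measure_int_stieltjes_sum_approx[OF _ _ \<open>0 \<le> \<eta>\<close>])
  have s_nonneg: "0 \<le> s j" for j using lift_Suc_mono_le[of s, OF mono, of 0 j] \<open>s 0 = 0\<close> by simp
  have s_le: "j \<le> m \<Longrightarrow> s j \<le> s m" for j using lift_Suc_mono_le[of s, OF mono] by blast
  have l_close_s: "\<bar>l n (s j) - s j\<bar> < \<delta> / 4" for j using l_close s_nonneg by blast
  show "l n (s j) \<le> l n (s (Suc j))" for j
    using time_change_le[OF time_change] s_nonneg mono by blast
  show "l n (s 0) = 0" using time_change_0[OF time_change] \<open>s 0 = 0\<close> by simp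
  show "f r = 0" if "l n (s m) < r" for r
    using that l_close_s[of m] by (intro vanish) linarith
  show "\<bar>f r - f (l n (s j))\<bar> \<le> \<eta>" if "j < m" "l n (s j) < r" "r \<le> l n (s (Suc j))" for j r
  proof (rule osc)
    show "0 \<le> l n (s j)" using time_change_nonneg[OF time_change s_nonneg] .
    show "r < s m + \<delta> / 4" using that l_close_s[of "Suc j"] s_le[of "Suc j"] by linarith
    show "r - l n (s j) < \<delta>" using that l_close_s[of j] l_close_s[of "Suc j"] mesh[of j] by linarith
  qed (use that in auto)
qed

lemma qv_measure_int_tendsto:
  fixes f :: "real \<Rightarrow> real"
  assumes f: "continuous_on {0..} f" and vanish: "\<And>s. K \<le> s \<Longrightarrow> f s = 0"
  shows "(\<lambda>n. qv_measure_int k t x n f) \<longlonglongrightarrow> integral\<^sup>L \<mu> f"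
  unfolding tendsto_iff dist_real_def
proof (intro allI impI)
  fix e :: real assume "0 < e"
  define T where "T = max K 0 + 1"
  define \<eta> where "\<eta> = e / (4 * (q T + 1))"
  have "0 \<le> q T" using q_nonneg by (simp add: T_def)
  then have "0 < \<eta>" and \<eta>_q: "\<eta> * (q T + 1) = e / 4"
    using \<open>0 < e\<close> by (simp_all add: \<eta>_def field_simps)
  obtain \<delta> s m where "0 < \<delta>" "s 0 = 0" "s m = T" and mono: "\<And>j. s j \<le> s (Suc j)"
    and mesh: "\<And>j. s (Suc j) - s j < \<delta> / 2" and vanish_grid: "\<And>r. s m - \<delta> / 4 < r \<Longrightarrow> f r = 0"
    and osc: "\<And>r r'. 0 \<le> r \<Longrightarrow> r < r' \<Longrightarrow> r' < s m + \<delta> / 4 \<Longrightarrow> r' - r < \<delta> \<Longrightarrow> \<bar>f r' - f r\<bar> \<le> \<eta>"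
    by (rule fine_grid_exists[OF f _ _ \<open>0 < \<eta>\<close>, of T]) (auto simp: T_def intro: vanish)
  have s_nonneg: "0 \<le> s j" for j using lift_Suc_mono_le[of s, OF mono, of 0 j] \<open>s 0 = 0\<close> by simp
  have integral_close: "\<bar>integral\<^sup>L \<mu> f - stieltjes_sum f q s m\<bar> \<le> \<eta> * q (s m)"
  proof (rule integral_stieltjes_sum_approx(2)[where b=s, OF f mono \<open>s 0 = 0\<close>])
    show "f r = 0" if "s m < r" for r using that \<open>0 < \<delta>\<close> by (intro vanish_grid) linarith
    show "\<bar>f r - f (s j)\<bar> \<le> \<eta>" if "j < m" "s j < r" "r \<le> s (Suc j)" for j r
      using that s_nonneg[of j] mesh[of j] lift_Suc_mono_le[of s, OF mono, of "Suc j" m] \<open>0 < \<delta>\<close>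
      by (intro osc) auto
  qed (use \<open>0 < \<eta>\<close> in simp)
  have "\<eta> * q (s m) \<le> e / 4" using \<eta>_q \<open>0 < \<eta>\<close> \<open>s m = T\<close> by (simp add: algebra_simps)
  have "\<forall>\<^sub>F n in sequentially.
      \<bar>f 0 * Q n 0 + stieltjes_sum f (Q n) (\<lambda>j. l n (s j)) m - stieltjes_sum f q s m\<bar> < e / 4"
    using tendstoD[OF stieltjes_sum_time_change_tendsto[where s=s and m=m, OF f s_nonneg], of "e / 4"]
      \<open>0 < e\<close> by (simp add: dist_real_def)
  moreover have "\<forall>\<^sub>F n in sequentially. Q n (l n (s m)) < q T + 1"
    using \<open>s m = T\<close> s_nonneg by (intro order_tendstoD(2)[OF Q_time_change_tendsto]) auto
  moreover have "\<forall>\<^sub>F n in sequentially. \<forall>r\<ge>0. \<bar>l n r - r\<bar> < \<delta> / 4"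
    using \<open>0 < \<delta>\<close> by (intro time_change_uniform) simp
  ultimately show "\<forall>\<^sub>F n in sequentially. \<bar>qv_measure_int k t x n f - integral\<^sup>L \<mu> f\<bar> < e"
  proof eventually_elim
    case (elim n)
    have "\<bar>qv_measure_int k t x n f - (f 0 * Q n 0 + stieltjes_sum f (Q n) (\<lambda>j. l n (s j)) m)\<bar>
        \<le> \<eta> * Q n (l n (s m))"
      by (rule qv_measure_int_time_changed_grid_approx[OF mono \<open>s 0 = 0\<close> less_imp_le[OF \<open>0 < \<eta>\<close>]
            mesh elim(3) vanish_grid osc])
    moreover have "\<eta> * Q n (l n (s m)) \<le> \<eta> * (q T + 1)"
      using elim(2) \<open>0 < \<eta>\<close> by simp
    ultimately show ?case
      using elim(1) \<eta>_q integral_close \<open>\<eta> * q (s m) \<le> e / 4\<close> by linarith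
  qed
qed

lemma qv_limit_stieltjes_measure: "qv_limit k t x \<mu>"
  unfolding qv_limit_def jump_eq_sq_jump[symmetric]
proof (intro conjI allI impI)
  show "(\<lambda>n. qv_measure_int k t x n f) \<longlonglongrightarrow> integral\<^sup>L \<mu> f"
    if "continuous_on {0..} f \<and> (\<exists>K. \<forall>s\<ge>K. f s = 0)" for f
    using that qv_measure_int_tendsto by blast
  show "jump q summable_on {0<..s}" if "0 \<le> s" for s
    by (rule jump_summable_on[of 0]) auto
  have eq: "measure \<mu> {0..s} - (\<Sum>\<^sub>\<infinity>u\<in>{0<..s}. jump q u) = continuous_part s" if "s \<in> {0..}" for s
    using that by (simp add: measure_Icc continuous_part_def)
  show "continuous_on {0..} (\<lambda>s. measure \<mu> {0..s} - (\<Sum>\<^sub>\<infinity>u\<in>{0<..s}. jump q u))"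
    by (rule continuous_on_cong[OF refl eq, THEN iffD2])
      (simp_all add: continuous_on_continuous_part)
  show "mono_on {0..} (\<lambda>s. measure \<mu> {0..s} - (\<Sum>\<^sub>\<infinity>u\<in>{0<..s}. jump q u))"
    using continuous_part_mono_le eq by (auto simp: mono_on_def)
qed (use sets_stieltjes_measure emeasure_Icc_finite in auto)

end


theorem proposition2p6:
  fixes k :: "nat \<Rightarrow> nat" and t :: "nat \<Rightarrow> nat \<Rightarrow> real"
    and x q :: "real \<Rightarrow> real"
  assumes "partition_seq k t"
    and "cadlag x"
    and "cadlag q"
    and "skorokhod_tendsto (qv_approx k t x) q"
  shows "in_Q0 k t x \<and> (\<forall>s\<ge>0. q s = quad_var k t x s)"
proof -
  obtain l where "\<forall>n. time_change (l n)"
    and "\<forall>\<epsilon>>0. \<forall>\<^sub>F n in sequentially. \<forall>s\<ge>0. \<bar>l n s - s\<bar> < \<epsilon>"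
    and "\<forall>N. \<forall>\<epsilon>>0. \<forall>\<^sub>F n in sequentially. \<forall>s\<in>{0..N}. \<bar>qv_approx k t x n (l n s) - q s\<bar> < \<epsilon>"
    using assms(4) unfolding skorokhod_tendsto_def by blast
  with assms(1-3) interpret qv_skorokhod_limit k t x q l
    by unfold_locales auto
  have "qv_limit k t x \<mu>" by (rule qv_limit_stieltjes_measure)
  moreover from this have "(THE \<nu>. qv_limit k t x \<nu>) = \<mu>"
    by (blast intro: qv_limit_unique)
  ultimately show ?thesis
    using assms(2) measure_Icc by (auto simp: in_Q0_def quad_var_def)
qed

end
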